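(* Let $\zeta_5=e^{2\pi i/5}$ and write $c_k=\theta[\tfrac15;\tfrac k5]$, $d_k=\theta[\tfrac35;\tfrac k5]$ for $k\in\{1,3,5,7,9\}$ (theta constants, functions of $\tau$). For every $\tau\in\mathbb{H}^2$, $$\theta[1;\tfrac15]=\zeta_5\,\frac{\zeta_5c_9^3d_5+c_3^3d_1}{d_3^3},\qquad \theta[1;\tfrac35]=\frac{-d_7^3c_5+d_9^3c_7}{c_1^3}.$$
   Context: Let $\mathbb{H}^2=\{\tau\in\mathbb{C}:\Im\tau>0\}$. For $(\epsilon,\epsilon')\in\mathbb{R}^2$, $$\theta[\epsilon;\epsilon'](\zeta,\tau)=\sum_{n\in\mathbb{Z}}\exp\Big(2\pi i\Big[\tfrac12\big(n+\tfrac{\epsilon}{2}\big)^2\tau+\big(n+\tfrac{\epsilon}{2}\big)\big(\zeta+\tfrac{\epsilon'}{2}\big)\Big]\Big),$$ and $\theta[\epsilon;\epsilon']=\theta[\epsilon;\epsilon'](0,\tau)$ denotes the theta constant. *)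

theory Defs
  imports "HOL-Analysis.Analysis"
begin

definition theta_char :: "real \<Rightarrow> real \<Rightarrow> complex \<Rightarrow> complex \<Rightarrow> complex" where
  "theta_char e e' z tau =
     (\<Sum>\<^sub>\<infinity> n::int. exp (2 * pi * \<i> *
        ((1/2) * (of_int n + of_real (e/2))^2 * tau
         + (of_int n + of_real (e/2)) * (z + of_real (e'/2)))))"

definition theta_const :: "real \<Rightarrow> real \<Rightarrow> complex \<Rightarrow> complex" where
  "theta_const e e' tau = theta_char e e' 0 tau"

end

theory Submission
  imports Defs
begin

text \<open>
  A product of four theta constants is then a sum over
  \<open>m \<in> \<int>\<^sup>4\<close> whose terms depend only on \<open>|m + a|\<^sup>2\<close> and, modulo integers, on \<open>(m + a)\<cdot>b\<close>. Splitting \<open>\<int>\<^sup>4\<close> into the even sublattice \<open>\<Sigma> m\<^sub>i \<equiv> 0 (mod 2)\<close> and its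
  coset, and using that half the \<open>4\<times>4\<close> Hadamard matrix is an orthogonal involution of the
  even sublattice, each product \<open>\<theta>[\<alpha>] \<theta>[\<beta>]\<^sup>3\<close> becomes a sum of two even-lattice sums. Sign
  changes and integral shifts of the characteristics identify these sums up to roots of unity,
  so three such products satisfy a linear relation; the reflection formulas for theta constants
  turn the two relations obtained this way into the stated identities. Dividing by \<open>d\<^sub>3\<^sup>3\<close> and
  \<open>c\<^sub>1\<^sup>3\<close> is justified by the Jacobi triple product, which shows that \<open>\<theta>[\<epsilon>;\<epsilon>'] \<noteq> 0\<close> for
  \<open>0 < \<epsilon> < 1\<close>; it is derived from Cauchy's \<open>q\<close>-binomial theorem by Tannery's theorem.
\<close>

section \<open>Theta series\<close>

lemma int_UNIV_split: "(UNIV::int set) = range int \<union> range (\<lambda>n. - int n - 1)"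
proof -
  have "x \<in> range int \<union> range (\<lambda>n. - int n - 1)" for x :: int
  proof (cases "x \<ge> 0")
    case True thus ?thesis by (metis UnI1 nonneg_int_cases rangeI)
  next
    case False thus ?thesis by (auto intro!: UnI2 image_eqI[where x="nat (-x-1)"])
  qed
  thus ?thesis by auto
qed

lemma has_sum_int_split:
  fixes f :: "int \<Rightarrow> 'a::banach"
  assumes "summable (\<lambda>n. norm (f (int n)))" "summable (\<lambda>n. norm (f (- int n - 1)))"
  shows "(f has_sum ((\<Sum>n. f (int n)) + (\<Sum>n. f (- int n - 1)))) UNIV"
proof -
  have "((\<lambda>n. f (int n)) has_sum (\<Sum>n. f (int n))) UNIV"
    by (rule norm_summable_imp_has_sum[OF assms(1) summable_sums[OF summable_norm_cancel[OF assms(1)]]])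
  then have nonneg: "(f has_sum (\<Sum>n. f (int n))) (range int)"
    using has_sum_reindex[of int UNIV f] by (simp add: o_def inj_on_def)
  have "((\<lambda>n. f (- int n - 1)) has_sum (\<Sum>n. f (- int n - 1))) UNIV"
    by (rule norm_summable_imp_has_sum[OF assms(2) summable_sums[OF summable_norm_cancel[OF assms(2)]]])
  then have neg: "(f has_sum (\<Sum>n. f (- int n - 1))) (range (\<lambda>n. - int n - 1))"
    using has_sum_reindex[of "\<lambda>n. - int n - 1" UNIV f] by (simp add: o_def inj_on_def)
  have "range int \<inter> range (\<lambda>n. - int n - 1) = {}"
    by auto
  from has_sum_Un_disjoint[OF nonneg neg this] show ?thesis
    by (simp flip: int_UNIV_split)
qed

definition e2pi :: "real \<Rightarrow> complex" where
  "e2pi r = exp (2 * pi * \<i> * of_real r)"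

lemma e2pi_add: "e2pi (r + s) = e2pi r * e2pi s"
  unfolding e2pi_def by (simp add: exp_add[symmetric] distrib_left)

lemma e2pi_of_int [simp]: "e2pi (of_int m) = 1"
  unfolding e2pi_def using exp_integer_2pi[of "of_int m"] by (simp add: mult.commute mult.left_commute)

lemma e2pi_0 [simp]: "e2pi 0 = 1"
  using e2pi_of_int[of 0] by simp

lemma e2pi_eqI: "r = s + of_int m \<Longrightarrow> e2pi r = e2pi s"
  by (simp add: e2pi_add)

lemma e2pi_add_half: "e2pi (r + 1/2) = - e2pi r"
  unfolding e2pi_add by (simp add: e2pi_def)

lemma exp_2pi_i_add_int:
  assumes "X = Y + of_int m"
  shows "exp (2 * pi * \<i> * X) = exp (2 * pi * \<i> * Y)"
proof -
  have "exp (2 * pi * \<i> * X) = exp (2 * pi * \<i> * Y) * e2pi (of_int m)"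
    unfolding assms e2pi_def by (simp add: exp_add[symmetric] algebra_simps)
  thus ?thesis by simp
qed

definition theta_term :: "complex \<Rightarrow> real \<Rightarrow> real \<Rightarrow> int \<Rightarrow> complex" where
  "theta_term t a b n =
     exp (2 * pi * \<i> * ((1/2) * (of_int n + of_real a)^2 * t + (of_int n + of_real a) * of_real b))"

definition theta_series :: "complex \<Rightarrow> real \<Rightarrow> real \<Rightarrow> complex" where
  "theta_series t a b = (\<Sum>\<^sub>\<infinity>n. theta_term t a b n)"

lemma theta_const_eq_theta_series: "theta_const e e' t = theta_series t (e/2) (e'/2)"
  unfolding theta_const_def theta_char_def theta_series_def theta_term_def by simp

lemma norm_theta_term: "norm (theta_term t a b n) = exp (- pi * Im t * (of_int n + a)^2)"
proof -
  have "(of_int n + of_real a :: complex) = of_real (of_int n + a)" by simp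
  then have "Re (2 * pi * \<i> * ((1/2) * (of_int n + of_real a)^2 * t + (of_int n + of_real a) * of_real b))
        = - pi * Im t * (of_int n + a)^2"
    by (simp only:) (simp add: power2_eq_square algebra_simps)
  thus ?thesis unfolding theta_term_def norm_exp_eq_Re by simp
qed

lemma abs_le_square_int: "\<bar>n::int\<bar> \<le> n^2"
proof (cases "n = 0")
  case False
  then have "\<bar>n\<bar> * 1 \<le> \<bar>n\<bar> * \<bar>n\<bar>" by (intro mult_left_mono) auto
  then show ?thesis by (simp add: power2_eq_square)
qed simp

lemma gaussian_le_geometric:
  fixes c a :: real and n :: int
  assumes "c > 0"
  shows "exp (- c * (of_int n + a)^2) \<le> exp (c * a^2) * exp (- c/2) ^ nat \<bar>n\<bar>"
proof -
  have "(of_int n + a)^2 \<ge> (of_int n)^2 / 2 - a^2"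
    using zero_le_power2[of "of_int n + 2 * a"] by (simp add: power2_eq_square field_simps)
  moreover have "real (nat \<bar>n\<bar>) \<le> (of_int n)^2"
    using abs_le_square_int[of n] by (simp flip: of_int_power)
  ultimately have "real (nat \<bar>n\<bar>) / 2 - a^2 \<le> (of_int n + a)^2"
    by linarith
  then have "c * (real (nat \<bar>n\<bar>) / 2 - a^2) \<le> c * (of_int n + a)^2"
    using assms by (intro mult_left_mono) auto
  then have "exp (- c * (of_int n + a)^2) \<le> exp (c * a^2 + real (nat \<bar>n\<bar>) * (- c/2))"
    by (simp add: algebra_simps)
  then show ?thesis by (simp only: exp_add exp_of_nat_mult)
qed

lemma summable_gaussian:
  fixes c a :: real assumes "c > 0"
  shows "summable (\<lambda>n::nat. exp (- c * (of_int (int n) + a)^2))"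
    and "summable (\<lambda>n::nat. exp (- c * (of_int (- int n - 1) + a)^2))"
proof -
  have geom: "summable (\<lambda>n. exp (c * a^2) * exp (- c/2) ^ n)"
    using assms by (intro summable_mult summable_geometric) auto
  show "summable (\<lambda>n::nat. exp (- c * (of_int (int n) + a)^2))"
    by (rule summable_comparison_test'[OF geom]) (use gaussian_le_geometric[OF assms, of "int _" a] in auto)
  show "summable (\<lambda>n::nat. exp (- c * (of_int (- int n - 1) + a)^2))"
  proof (rule summable_comparison_test'[OF summable_ignore_initial_segment[OF geom, of 1]])
    fix n :: nat
    show "norm (exp (- c * (of_int (- int n - 1) + a)^2)) \<le> exp (c * a^2) * exp (- c/2) ^ (n + 1)"
      using gaussian_le_geometric[OF assms, of "- int n - 1" a] by (simp add: nat_add_distrib)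
  qed
qed

lemma summable_norm_theta_term:
  assumes "Im t > 0"
  shows "summable (\<lambda>n. norm (theta_term t a b (int n)))"
    and "summable (\<lambda>n. norm (theta_term t a b (- int n - 1)))"
  using summable_gaussian[of "pi * Im t" a] assms by (simp_all add: norm_theta_term mult.assoc)

lemma has_sum_theta_series:
  assumes "Im t > 0"
  shows "(theta_term t a b has_sum theta_series t a b) UNIV"
proof -
  have "(theta_term t a b has_sum ((\<Sum>n. theta_term t a b (int n)) + (\<Sum>n. theta_term t a b (- int n - 1)))) UNIV"
    by (rule has_sum_int_split[OF summable_norm_theta_term[OF assms]])
  then show ?thesis
    unfolding theta_series_def by (simp add: infsumI)
qed

lemma theta_term_shift: "theta_term t (a + of_int k) b n = theta_term t a b (n + k)"
  unfolding theta_term_def by (simp add: algebra_simps)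

lemma theta_series_shift_int: "theta_series t (a + of_int k) b = theta_series t a b"
proof -
  have shift: "theta_term t (a + of_int k) b = (\<lambda>n. theta_term t a b (n + k))"
    by (simp add: fun_eq_iff theta_term_shift)
  have "bij_betw (\<lambda>n. n + k) UNIV (UNIV::int set)"
    by (rule bij_betwI[where g="\<lambda>n. n - k"]) auto
  from infsum_reindex_bij_betw[OF this, of "theta_term t a b"] show ?thesis
    unfolding theta_series_def shift by simp
qed

lemma theta_series_uminus: "theta_series t (- a) (- b) = theta_series t a b"
proof -
  have flip: "theta_term t (- a) (- b) = (\<lambda>n. theta_term t a b (- n))"
    unfolding theta_term_def by (simp add: algebra_simps power2_eq_square)
  have "bij_betw uminus UNIV (UNIV::int set)"
    by (rule bij_betwI[where g=uminus]) auto
  from infsum_reindex_bij_betw[OF this, of "theta_term t a b"] show ?thesis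
    unfolding theta_series_def flip by simp
qed

lemma theta_series_add_one: "theta_series t a (b + 1) = e2pi a * theta_series t a b"
proof -
  have shift: "theta_term t a (b + 1) = (\<lambda>n. e2pi a * theta_term t a b n)"
  proof
    fix n
    let ?Q = "(1/2) * (of_int n + of_real a)^2 * t + (of_int n + of_real a) * of_real b"
    have "theta_term t a (b + 1) n = exp (2 * pi * \<i> * (?Q + of_real a))"
      unfolding theta_term_def by (rule exp_2pi_i_add_int[where m=n]) (simp add: algebra_simps)
    also have "\<dots> = e2pi a * theta_term t a b n"
      unfolding theta_term_def e2pi_def distrib_left exp_add by (simp only: mult.commute)
    finally show "theta_term t a (b + 1) n = e2pi a * theta_term t a b n" .
  qed
  show ?thesis
    unfolding theta_series_def shift by (rule infsum_cmult_right')
qed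

lemma theta_series_diff_one: "theta_series t a (b - 1) = e2pi (- a) * theta_series t a b"
  using theta_series_add_one[of t a "b - 1"] by (simp add: e2pi_def exp_minus field_simps)

lemma theta_series_one_minus: "theta_series t (1 - a) b = e2pi (- a) * theta_series t a (1 - b)"
proof -
  have "theta_series t (1 - a) b = theta_series t (a + of_int (-1)) (- b)"
    using theta_series_uminus[of t "1 - a" b] by simp
  also have "\<dots> = theta_series t a ((1 - b) - 1)"
    by (simp only: theta_series_shift_int) simp
  finally show ?thesis
    by (simp only: theta_series_diff_one)
qed

section \<open>Sums over the even sublattice of \<open>\<int>\<^sup>4\<close>\<close>

lemma has_sum_product:
  fixes f :: "'a \<Rightarrow> complex" and g :: "'b \<Rightarrow> complex"
  assumes f: "f summable_on A" and g: "g summable_on B"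
  shows "((\<lambda>(x,y). f x * g y) has_sum (infsum f A * infsum g B)) (A \<times> B)"
proof -
  define F where "F = (\<lambda>(x,y). f x * g y)"
  have F: "F (x,y) = f x * g y" for x y unfolding F_def by simp
  have fa: "(\<lambda>x. norm (f x)) summable_on A" using f summable_on_iff_abs_summable_on_complex by blast
  have ga: "(\<lambda>x. norm (g x)) summable_on B" using g summable_on_iff_abs_summable_on_complex by blast
  have "(\<lambda>z. norm (F z)) summable_on (A \<times> B)"
  proof (rule Infinite_Sum.abs_summable_on_Sigma_iff[THEN iffD2], intro conjI ballI)
    fix x assume "x \<in> A"
    show "(\<lambda>y. norm (F (x, y))) summable_on B"
      using summable_on_cmult_right[OF ga, of "norm (f x)"] by (simp add: F norm_mult)
  next
    have "(\<lambda>x. norm (f x) * infsum (\<lambda>y. norm (g y)) B) summable_on A"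
      using summable_on_cmult_left[OF fa] by simp
    moreover have "norm (infsum (\<lambda>y. norm (F (x, y))) B) = norm (f x) * infsum (\<lambda>y. norm (g y)) B" for x
      by (simp add: F norm_mult infsum_cmult_right' infsum_nonneg)
    ultimately show "(\<lambda>x. norm (infsum (\<lambda>y. norm (F (x, y))) B)) summable_on A"
      by simp
  qed
  then have sm: "F summable_on (A \<times> B)"
    using summable_on_iff_abs_summable_on_complex by blast
  have "infsum F (A \<times> B) = infsum (\<lambda>x. infsum (\<lambda>y. F (x,y)) B) A"
    using infsum_Sigma_banach[OF sm] by simp
  also have "\<dots> = infsum f A * infsum g B"
    by (simp add: F infsum_cmult_right' infsum_cmult_left')
  finally show ?thesis
    using sm unfolding F_def by (metis has_sum_infsum)
qed

lemma infsum_reindex_bij_betw_cmult: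
  fixes F F' :: "_ \<Rightarrow> complex"
  assumes "bij_betw g A B" "\<And>m. m \<in> A \<Longrightarrow> F (g m) = c * F' m"
  shows "infsum F B = c * infsum F' A"
proof -
  have "infsum F B = infsum (\<lambda>m. F (g m)) A"
    using infsum_reindex_bij_betw[OF assms(1), of F] by simp
  also have "\<dots> = infsum (\<lambda>m. c * F' m) A"
    by (rule infsum_cong) (use assms(2) in auto)
  finally show ?thesis
    by (simp add: infsum_cmult_right')
qed

type_synonym real4 = "real \<times> real \<times> real \<times> real"
type_synonym int4 = "int \<times> int \<times> int \<times> int"

fun theta4_term :: "complex \<Rightarrow> real4 \<Rightarrow> real4 \<Rightarrow> int4 \<Rightarrow> complex" where
  "theta4_term t (a0,a1,a2,a3) (b0,b1,b2,b3) (m0,m1,m2,m3) =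
     theta_term t a0 b0 m0 * (theta_term t a1 b1 m1 * (theta_term t a2 b2 m2 * theta_term t a3 b3 m3))"

definition even_lattice :: "int4 set" where
  "even_lattice = {(m0,m1,m2,m3). even (m0 + m1 + m2 + m3)}"

definition theta4_even :: "complex \<Rightarrow> real4 \<Rightarrow> real4 \<Rightarrow> complex" where
  "theta4_even t a b = infsum (theta4_term t a b) even_lattice"

lemma has_sum_theta4_term:
  assumes "Im t > 0"
  shows "(theta4_term t (a0,a1,a2,a3) (b0,b1,b2,b3) has_sum
           theta_series t a0 b0 * (theta_series t a1 b1 * (theta_series t a2 b2 * theta_series t a3 b3))) UNIV"
proof -
  have prod: "((\<lambda>(x,y). theta_term t a b x * g y) has_sum (theta_series t a b * G)) UNIV"
    if "(g has_sum G) UNIV" for a b and g :: "'x \<Rightarrow> complex" and G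
  proof -
    have "theta_term t a b summable_on UNIV" "g summable_on UNIV"
      using has_sum_theta_series[OF assms, of a b] that by (auto simp: summable_on_def)
    from has_sum_product[OF this] show ?thesis
      using has_sum_theta_series[OF assms, of a b] that by (simp add: infsumI)
  qed
  have "theta4_term t (a0,a1,a2,a3) (b0,b1,b2,b3) =
      (\<lambda>(m0,m1,m2,m3). theta_term t a0 b0 m0 * (theta_term t a1 b1 m1 * (theta_term t a2 b2 m2 * theta_term t a3 b3 m3)))"
    by (auto simp: fun_eq_iff)
  with prod[OF prod[OF prod[OF has_sum_theta_series[OF assms]]]] show ?thesis
    by (simp add: case_prod_unfold)
qed

text \<open>The odd part of the lattice sum is the even part with \<open>a0\<close> shifted by one.\<close>
lemma theta_series_product:
  assumes "Im t > 0"
  shows "theta_series t a0 b0 * theta_series t a1 b1 * theta_series t a2 b2 * theta_series t a3 b3 =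
         theta4_even t (a0,a1,a2,a3) (b0,b1,b2,b3) + theta4_even t (a0 + 1,a1,a2,a3) (b0,b1,b2,b3)"
proof -
  let ?T = "theta4_term t (a0,a1,a2,a3) (b0,b1,b2,b3)"
  have hs: "(?T has_sum theta_series t a0 b0 * (theta_series t a1 b1 * (theta_series t a2 b2 * theta_series t a3 b3))) UNIV"
    by (rule has_sum_theta4_term[OF assms])
  then have sm: "?T summable_on UNIV"
    by (auto simp: summable_on_def)
  have "infsum ?T UNIV = infsum ?T even_lattice + infsum ?T (- even_lattice)"
    using infsum_Un_disjoint[OF summable_on_subset_banach[OF sm] summable_on_subset_banach[OF sm],
        of even_lattice "- even_lattice"] by simp
  moreover have "infsum ?T (- even_lattice) = 1 * theta4_even t (a0 + 1,a1,a2,a3) (b0,b1,b2,b3)"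
    unfolding theta4_even_def
  proof (rule infsum_reindex_bij_betw_cmult)
    show "bij_betw (\<lambda>(m0,m1,m2,m3). (m0 + 1,m1,m2,m3)) even_lattice (- even_lattice)"
      by (rule bij_betwI[where g="\<lambda>(m0,m1,m2,m3). (m0 - 1,m1,m2,m3)"]) (auto simp: even_lattice_def)
  qed (auto simp: theta_term_shift[of _ _ 1, simplified])
  ultimately show ?thesis
    using infsumI[OF hs] by (simp add: theta4_even_def mult.assoc)
qed

lemma theta4_term_eq_exp:
  "theta4_term t (a0,a1,a2,a3) (b0,b1,b2,b3) (m0,m1,m2,m3) =
     exp (2 * pi * \<i> * ((1/2) * of_real ((of_int m0+a0)^2 + (of_int m1+a1)^2 + (of_int m2+a2)^2 + (of_int m3+a3)^2) * t
        + of_real ((of_int m0+a0)*b0 + (of_int m1+a1)*b1 + (of_int m2+a2)*b2 + (of_int m3+a3)*b3)))"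
  unfolding theta4_term.simps theta_term_def exp_add[symmetric]
  by (rule arg_cong[where f=exp]) (simp add: algebra_simps)

lemma theta4_term_eqI:
  assumes "(of_int m0+a0)^2 + (of_int m1+a1)^2 + (of_int m2+a2)^2 + (of_int m3+a3)^2 =
           (of_int n0+c0)^2 + (of_int n1+c1)^2 + (of_int n2+c2)^2 + (of_int n3+c3)^2"
  assumes "(of_int m0+a0)*b0 + (of_int m1+a1)*b1 + (of_int m2+a2)*b2 + (of_int m3+a3)*b3 =
           (of_int n0+c0)*d0 + (of_int n1+c1)*d1 + (of_int n2+c2)*d2 + (of_int n3+c3)*d3 + K + of_int j"
  shows "theta4_term t (a0,a1,a2,a3) (b0,b1,b2,b3) (m0,m1,m2,m3) =
         e2pi K * theta4_term t (c0,c1,c2,c3) (d0,d1,d2,d3) (n0,n1,n2,n3)"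
proof -
  have "theta4_term t (a0,a1,a2,a3) (b0,b1,b2,b3) (m0,m1,m2,m3) =
    exp (2 * pi * \<i> * ((1/2) * of_real ((of_int n0+c0)^2 + (of_int n1+c1)^2 + (of_int n2+c2)^2 + (of_int n3+c3)^2) * t
        + of_real ((of_int n0+c0)*d0 + (of_int n1+c1)*d1 + (of_int n2+c2)*d2 + (of_int n3+c3)*d3) + of_real K))"
    unfolding theta4_term_eq_exp assms by (rule exp_2pi_i_add_int[where m=j]) (simp add: algebra_simps)
  also have "\<dots> = e2pi K * theta4_term t (c0,c1,c2,c3) (d0,d1,d2,d3) (n0,n1,n2,n3)"
    unfolding theta4_term_eq_exp e2pi_def by (simp add: exp_add[symmetric] algebra_simps)
  finally show ?thesis .
qed

fun half_hadamard :: "real4 \<Rightarrow> real4" where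
  "half_hadamard (x0,x1,x2,x3) =
     ((x0+x1+x2+x3)/2, (x0+x1-x2-x3)/2, (x0-x1+x2-x3)/2, (x0-x1-x2+x3)/2)"

text \<open>The half-Hadamard matrix on the even lattice, where the halving is exact.\<close>
fun half_hadamard_int :: "int4 \<Rightarrow> int4" where
  "half_hadamard_int (m0,m1,m2,m3) =
     (let k = (m0+m1+m2+m3) div 2 in (k, k-m2-m3, k-m1-m3, k-m1-m2))"

lemma half_hadamard_int_even_lattice:
  "m \<in> even_lattice \<Longrightarrow> half_hadamard_int m \<in> even_lattice \<and> half_hadamard_int (half_hadamard_int m) = m"
  by (cases m) (auto simp: even_lattice_def Let_def; presburger)

lemma bij_betw_half_hadamard_int: "bij_betw half_hadamard_int even_lattice even_lattice"
  by (rule bij_betwI[where g=half_hadamard_int]) (use half_hadamard_int_even_lattice in auto)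

lemma theta4_even_half_hadamard:
  assumes "half_hadamard a = a'" "half_hadamard b = b'"
  shows "theta4_even t a b = theta4_even t a' b'"
proof -
  obtain a0 a1 a2 a3 b0 b1 b2 b3 where ab: "a = (a0,a1,a2,a3)" "b = (b0,b1,b2,b3)"
    by (cases a, cases b) auto
  have "theta4_even t a b = 1 * theta4_even t a' b'"
    unfolding theta4_even_def
  proof (rule infsum_reindex_bij_betw_cmult[OF bij_betw_half_hadamard_int])
    fix m assume "m \<in> even_lattice"
    then obtain m0 m1 m2 m3 where m: "m = (m0,m1,m2,m3)" and "even (m0+m1+m2+m3)"
      by (cases m) (auto simp: even_lattice_def)
    then obtain k where k: "m0+m1+m2+m3 = 2*k"
      by (elim evenE)
    have h: "real_of_int m0 = 2 * of_int k - of_int m1 - of_int m2 - of_int m3"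
      using arg_cong[OF k, of real_of_int] by simp
    have "theta4_term t (a0,a1,a2,a3) (b0,b1,b2,b3) (k, k-m2-m3, k-m1-m3, k-m1-m2) =
      e2pi 0 * theta4_term t (half_hadamard a) (half_hadamard b) (m0,m1,m2,m3)"
      unfolding ab half_hadamard.simps
      by (rule theta4_term_eqI[where j=0]) (unfold h of_int_diff, (simp add: power2_eq_square field_simps; algebra)+)
    then show "theta4_term t a b (half_hadamard_int m) = 1 * theta4_term t a' b' m"
      using k by (simp add: m ab flip: assms)
  qed
  then show ?thesis
    by simp
qed

lemma theta4_even_uminus:
  assumes "a' = - a" "b' = - b"
  shows "theta4_even t a' b' = theta4_even t a b"
proof -
  obtain a0 a1 a2 a3 b0 b1 b2 b3 where ab: "a = (a0,a1,a2,a3)" "b = (b0,b1,b2,b3)"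
    by (cases a, cases b) auto
  have "bij_betw uminus even_lattice even_lattice"
    by (rule bij_betwI[where g=uminus]) (auto simp: even_lattice_def; presburger)+
  then have "theta4_even t a b = 1 * theta4_even t a' b'"
    unfolding theta4_even_def
  proof (rule infsum_reindex_bij_betw_cmult)
    fix m :: int4
    obtain m0 m1 m2 m3 where m: "m = (m0,m1,m2,m3)" by (cases m) auto
    have "theta4_term t (a0,a1,a2,a3) (b0,b1,b2,b3) (-m0,-m1,-m2,-m3) =
      e2pi 0 * theta4_term t (-a0,-a1,-a2,-a3) (-b0,-b1,-b2,-b3) (m0,m1,m2,m3)"
      by (rule theta4_term_eqI[where j=0]) (simp_all add: power2_eq_square algebra_simps)
    then show "theta4_term t a b (- m) = 1 * theta4_term t a' b' m"
      by (simp add: m ab assms)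
  qed
  then show ?thesis
    by simp
qed

lemma theta4_even_uminus_first:
  assumes "a0' = - a0" "b0' = - b0"
  shows "theta4_even t (a0',a1,a2,a3) (b0',b1,b2,b3) = theta4_even t (a0,a1,a2,a3) (b0,b1,b2,b3)"
proof -
  have "bij_betw (\<lambda>(m0,m1,m2,m3). (-m0,m1,m2,m3)) even_lattice even_lattice"
    by (rule bij_betwI[where g="\<lambda>(m0,m1,m2,m3). (-m0,m1,m2,m3)"]) (auto simp: even_lattice_def)
  then have "theta4_even t (a0,a1,a2,a3) (b0,b1,b2,b3) = 1 * theta4_even t (a0',a1,a2,a3) (b0',b1,b2,b3)"
    unfolding theta4_even_def
  proof (rule infsum_reindex_bij_betw_cmult)
    fix m :: int4
    obtain m0 m1 m2 m3 where m: "m = (m0,m1,m2,m3)" by (cases m) auto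
    have "theta4_term t (a0,a1,a2,a3) (b0,b1,b2,b3) (-m0,m1,m2,m3) =
      e2pi 0 * theta4_term t (a0',a1,a2,a3) (b0',b1,b2,b3) (m0,m1,m2,m3)"
      by (rule theta4_term_eqI[where j=0]) (simp_all add: assms power2_eq_square algebra_simps)
    then show "theta4_term t (a0,a1,a2,a3) (b0,b1,b2,b3) ((\<lambda>(m0,m1,m2,m3). (-m0,m1,m2,m3)) m) =
        1 * theta4_term t (a0',a1,a2,a3) (b0',b1,b2,b3) m"
      by (simp add: m)
  qed
  then show ?thesis
    by simp
qed

lemma theta4_even_add_even_lattice:
  assumes "even (ua+ub+uc+ud)" "a' = (a0 + of_int ua, a1 + of_int ub, a2 + of_int uc, a3 + of_int ud)"
  shows "theta4_even t a' b = theta4_even t (a0,a1,a2,a3) b"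
proof -
  obtain b0 b1 b2 b3 where b: "b = (b0,b1,b2,b3)"
    by (cases b) auto
  have "bij_betw (\<lambda>(m0,m1,m2,m3). (m0+ua,m1+ub,m2+uc,m3+ud)) even_lattice even_lattice"
    by (rule bij_betwI[where g="\<lambda>(m0,m1,m2,m3). (m0-ua,m1-ub,m2-uc,m3-ud)"])
       (use assms(1) in \<open>clarsimp simp: even_lattice_def; presburger\<close>)+
  then have "theta4_even t (a0,a1,a2,a3) b = 1 * theta4_even t a' b"
    unfolding theta4_even_def
  proof (rule infsum_reindex_bij_betw_cmult)
    fix m :: int4
    obtain m0 m1 m2 m3 where m: "m = (m0,m1,m2,m3)" by (cases m) auto
    have "theta4_term t (a0,a1,a2,a3) b (m0+ua,m1+ub,m2+uc,m3+ud) = e2pi 0 * theta4_term t a' b (m0,m1,m2,m3)"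
      unfolding b assms(2) by (rule theta4_term_eqI[where j=0]) (simp_all add: algebra_simps)
    then show "theta4_term t (a0,a1,a2,a3) b ((\<lambda>(m0,m1,m2,m3). (m0+ua,m1+ub,m2+uc,m3+ud)) m) =
        1 * theta4_term t a' b m"
      by (simp add: m)
  qed
  then show ?thesis
    by simp
qed

lemma theta4_even_add_b:
  assumes "\<And>m0 m1 m2 m3. even (m0+m1+m2+m3) \<Longrightarrow> \<exists>j::int.
     (of_int m0 + a0) * c0 + (of_int m1 + a1) * c1 + (of_int m2 + a2) * c2 + (of_int m3 + a3) * c3 = K + of_int j"
  shows "theta4_even t (a0,a1,a2,a3) (b0 + c0, b1 + c1, b2 + c2, b3 + c3) =
         e2pi K * theta4_even t (a0,a1,a2,a3) (b0,b1,b2,b3)"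
  unfolding theta4_even_def
proof (rule infsum_reindex_bij_betw_cmult[OF bij_betw_id[unfolded id_def]])
  fix m assume "m \<in> even_lattice"
  then obtain m0 m1 m2 m3 where m: "m = (m0,m1,m2,m3)" and "even (m0+m1+m2+m3)"
    by (cases m) (auto simp: even_lattice_def)
  with assms obtain j where "(of_int m0 + a0) * c0 + (of_int m1 + a1) * c1 + (of_int m2 + a2) * c2
      + (of_int m3 + a3) * c3 = K + of_int j"
    by blast
  then show "theta4_term t (a0,a1,a2,a3) (b0 + c0, b1 + c1, b2 + c2, b3 + c3) m =
      e2pi K * theta4_term t (a0,a1,a2,a3) (b0,b1,b2,b3) m"
    unfolding m by (intro theta4_term_eqI[where j=j]) (simp_all add: algebra_simps)
qed

lemma theta4_even_add_int_b:
  assumes "b' = (b0 + of_int ka, b1 + of_int kb, b2 + of_int kc, b3 + of_int kd)"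
    "K = a0 * of_int ka + a1 * of_int kb + a2 * of_int kc + a3 * of_int kd"
  shows "theta4_even t (a0,a1,a2,a3) b' = e2pi K * theta4_even t (a0,a1,a2,a3) (b0,b1,b2,b3)"
  unfolding assms(1)
proof (rule theta4_even_add_b)
  fix m0 m1 m2 m3 :: int
  show "\<exists>j::int. (of_int m0 + a0) * of_int ka + (of_int m1 + a1) * of_int kb + (of_int m2 + a2) * of_int kc
      + (of_int m3 + a3) * of_int kd = K + of_int j"
    by (rule exI[where x="m0*ka + m1*kb + m2*kc + m3*kd"]) (simp add: assms(2) algebra_simps)
qed

lemma theta4_even_add_half_b:
  assumes "b' = (b0 + 1/2, b1 + 1/2, b2 + 1/2, b3 + 1/2)" "K = (a0 + a1 + a2 + a3) / 2"
  shows "theta4_even t (a0,a1,a2,a3) b' = e2pi K * theta4_even t (a0,a1,a2,a3) (b0,b1,b2,b3)"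
  unfolding assms(1)
proof (rule theta4_even_add_b)
  fix m0 m1 m2 m3 :: int
  assume "even (m0 + m1 + m2 + m3)"
  then obtain k where "m0 + m1 + m2 + m3 = 2 * k"
    by (rule evenE)
  then have "real_of_int m0 + of_int m1 + of_int m2 + of_int m3 = 2 * of_int k"
    by (metis of_int_add of_int_mult of_int_numeral)
  then show "\<exists>j::int. (of_int m0 + a0) * (1/2) + (of_int m1 + a1) * (1/2) + (of_int m2 + a2) * (1/2)
      + (of_int m3 + a3) * (1/2) = K + of_int j"
    by (intro exI[where x=k]) (simp add: assms(2) field_simps)
qed

section \<open>Two relations between theta constants\<close>

lemma theta_series_mult_cube:
  assumes "Im t > 0"
  shows "theta_series t a b * theta_series t c d ^ 3 =
         theta4_even t (a,c,c,c) (b,d,d,d) + theta4_even t (a + 1,c,c,c) (b,d,d,d)"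
  using theta_series_product[OF assms, of a b c d c d c d] by (simp add: power3_eq_cube mult.assoc)

lemma theta_product_relation_1:
  assumes "Im t > 0"
  shows "theta_series t (1/2) (1/10) * theta_series t (3/10) (3/10) ^ 3 =
         theta_series t (7/10) (1/2) * theta_series t (1/10) (-1/10) ^ 3
         + e2pi (1/5) * (theta_series t (3/10) (1/10) * theta_series t (1/10) (3/10) ^ 3)"
proof -
  define A where "A = theta4_even t (7/10, 1/10, 1/10, 1/10) (1/2, -1/10, -1/10, -1/10)"
  define X where "X = theta4_even t (17/10, 1/10, 1/10, 1/10) (-1/2, -1/10, -1/10, -1/10)"
  define Y where "Y = theta4_even t (6/5, 3/5, 3/5, 3/5) (-1/2, -1/10, -1/10, -1/10)"
  have "theta_series t (1/2) (1/10) * theta_series t (3/10) (3/10) ^ 3 =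
      theta4_even t (1/2, 3/10, 3/10, 3/10) (1/10, 3/10, 3/10, 3/10)
      + theta4_even t (3/2, 3/10, 3/10, 3/10) (1/10, 3/10, 3/10, 3/10)"
    by (simp add: theta_series_mult_cube[OF assms])
  also have "theta4_even t (1/2, 3/10, 3/10, 3/10) (1/10, 3/10, 3/10, 3/10) = A"
    unfolding A_def by (rule theta4_even_half_hadamard) simp_all
  also have "theta4_even t (3/2, 3/10, 3/10, 3/10) (1/10, 3/10, 3/10, 3/10) =
      theta4_even t (6/5, 3/5, 3/5, 3/5) (1/2, -1/10, -1/10, -1/10)"
    by (rule theta4_even_half_hadamard) simp_all
  also have "\<dots> = e2pi (6/5) * Y"
    unfolding Y_def by (rule theta4_even_add_int_b[where ka=1 and kb=0 and kc=0 and kd=0]) simp_all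
  also have "e2pi (6/5) = e2pi (1/5)"
    by (rule e2pi_eqI[where m=1]) simp
  finally have P0: "theta_series t (1/2) (1/10) * theta_series t (3/10) (3/10) ^ 3 = A + e2pi (1/5) * Y" .
  have "theta_series t (7/10) (1/2) * theta_series t (1/10) (-1/10) ^ 3 =
      A + theta4_even t (17/10, 1/10, 1/10, 1/10) (1/2, -1/10, -1/10, -1/10)"
    unfolding A_def by (simp add: theta_series_mult_cube[OF assms])
  also have "theta4_even t (17/10, 1/10, 1/10, 1/10) (1/2, -1/10, -1/10, -1/10) = e2pi (17/10) * X"
    unfolding X_def by (rule theta4_even_add_int_b[where ka=1 and kb=0 and kc=0 and kd=0]) simp_all
  also have "e2pi (17/10) = - e2pi (1/5)"
    using e2pi_add_half[of "1/5"] e2pi_eqI[of "17/10" "7/10" 1] by simp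
  finally have P1: "theta_series t (7/10) (1/2) * theta_series t (1/10) (-1/10) ^ 3 = A - e2pi (1/5) * X"
    by simp
  have "theta_series t (3/10) (1/10) * theta_series t (1/10) (3/10) ^ 3 =
      theta4_even t (3/10, 1/10, 1/10, 1/10) (1/10, 3/10, 3/10, 3/10)
      + theta4_even t (13/10, 1/10, 1/10, 1/10) (1/10, 3/10, 3/10, 3/10)"
    by (simp add: theta_series_mult_cube[OF assms])
  also have "theta4_even t (3/10, 1/10, 1/10, 1/10) (1/10, 3/10, 3/10, 3/10) =
      theta4_even t (3/10, 1/10, 1/10, 1/10) (1/2, -1/10, -1/10, -1/10)"
    by (rule theta4_even_half_hadamard) simp_all
  also have "\<dots> = theta4_even t (-3/10, 1/10, 1/10, 1/10) (-1/2, -1/10, -1/10, -1/10)"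
    by (rule theta4_even_uminus_first[symmetric]) simp_all
  also have "\<dots> = X"
    unfolding X_def by (rule theta4_even_add_even_lattice[symmetric, where ua=2 and ub=0 and uc=0 and ud=0]) simp_all
  also have "theta4_even t (13/10, 1/10, 1/10, 1/10) (1/10, 3/10, 3/10, 3/10) =
      theta4_even t (4/5, 3/5, 3/5, 3/5) (1/2, -1/10, -1/10, -1/10)"
    by (rule theta4_even_half_hadamard) simp_all
  also have "\<dots> = theta4_even t (-4/5, 3/5, 3/5, 3/5) (-1/2, -1/10, -1/10, -1/10)"
    by (rule theta4_even_uminus_first[symmetric]) simp_all
  also have "\<dots> = Y"
    unfolding Y_def by (rule theta4_even_add_even_lattice[symmetric, where ua=2 and ub=0 and uc=0 and ud=0]) simp_all
  finally have P2: "theta_series t (3/10) (1/10) * theta_series t (1/10) (3/10) ^ 3 = X + Y" .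
  show ?thesis
    unfolding P0 P1 P2 by (simp add: algebra_simps)
qed

lemma theta_product_relation_2:
  assumes "Im t > 0"
  shows "theta_series t (1/2) (3/10) * theta_series t (1/10) (1/10) ^ 3 =
         theta_series t (9/10) (3/10) * theta_series t (7/10) (1/10) ^ 3
         - theta_series t (1/10) (1/2) * theta_series t (3/10) (7/10) ^ 3"
proof -
  define E where "E = theta4_even t (1/2, 1/10, 1/10, 1/10) (3/10, 1/10, 1/10, 1/10)"
  define F where "F = theta4_even t (9/10, 7/10, 7/10, 7/10) (3/10, 1/10, 1/10, 1/10)"
  define G where "G = theta4_even t (19/10, 7/10, 7/10, 7/10) (3/10, 1/10, 1/10, 1/10)"
  have "theta_series t (1/2) (3/10) * theta_series t (1/10) (1/10) ^ 3 =
      E + theta4_even t (3/2, 1/10, 1/10, 1/10) (3/10, 1/10, 1/10, 1/10)"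
    unfolding E_def by (simp add: theta_series_mult_cube[OF assms])
  also have "theta4_even t (3/2, 1/10, 1/10, 1/10) (3/10, 1/10, 1/10, 1/10) = F"
    unfolding F_def by (rule theta4_even_half_hadamard) simp_all
  finally have P0: "theta_series t (1/2) (3/10) * theta_series t (1/10) (1/10) ^ 3 = E + F" .
  have P1: "theta_series t (9/10) (3/10) * theta_series t (7/10) (1/10) ^ 3 = F + G"
    unfolding F_def G_def by (simp add: theta_series_mult_cube[OF assms])
  have "theta_series t (1/10) (1/2) * theta_series t (3/10) (7/10) ^ 3 =
      theta4_even t (1/10, 3/10, 3/10, 3/10) (1/2, 7/10, 7/10, 7/10)
      + theta4_even t (11/10, 3/10, 3/10, 3/10) (1/2, 7/10, 7/10, 7/10)"
    by (simp add: theta_series_mult_cube[OF assms])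
  also have "theta4_even t (1/10, 3/10, 3/10, 3/10) (1/2, 7/10, 7/10, 7/10) =
      theta4_even t (1/2, -1/10, -1/10, -1/10) (13/10, -1/10, -1/10, -1/10)"
    by (rule theta4_even_half_hadamard) simp_all
  also have "\<dots> = theta4_even t (-1/2, 1/10, 1/10, 1/10) (-13/10, 1/10, 1/10, 1/10)"
    by (rule theta4_even_uminus) simp_all
  also have "\<dots> = theta4_even t (1/2, 1/10, 1/10, 1/10) (13/10, 1/10, 1/10, 1/10)"
    by (rule theta4_even_uminus_first) simp_all
  also have "\<dots> = e2pi (1/2) * E"
    unfolding E_def by (rule theta4_even_add_int_b[where ka=1 and kb=0 and kc=0 and kd=0]) simp_all
  also have "theta4_even t (11/10, 3/10, 3/10, 3/10) (1/2, 7/10, 7/10, 7/10) =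
      theta4_even t (1, 2/5, 2/5, 2/5) (13/10, -1/10, -1/10, -1/10)"
    by (rule theta4_even_half_hadamard) simp_all
  also have "\<dots> = e2pi (-1/5) * theta4_even t (1, 2/5, 2/5, 2/5) (3/10, 9/10, 9/10, 9/10)"
    by (rule theta4_even_add_int_b[where ka=1 and kb="-1" and kc="-1" and kd="-1"]) simp_all
  also have "theta4_even t (1, 2/5, 2/5, 2/5) (3/10, 9/10, 9/10, 9/10) =
      theta4_even t (-1, -2/5, -2/5, -2/5) (-3/10, -9/10, -9/10, -9/10)"
    by (rule theta4_even_uminus) simp_all
  also have "\<dots> = theta4_even t (1, -2/5, -2/5, -2/5) (3/10, -9/10, -9/10, -9/10)"
    by (rule theta4_even_uminus_first) simp_all
  also have "\<dots> = theta4_even t (-1/10, 7/10, 7/10, 7/10) (-6/5, 3/5, 3/5, 3/5)"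
    by (rule theta4_even_half_hadamard) simp_all
  also have "\<dots> = e2pi 1 * theta4_even t (-1/10, 7/10, 7/10, 7/10) (-17/10, 1/10, 1/10, 1/10)"
    by (rule theta4_even_add_half_b) simp_all
  also have "theta4_even t (-1/10, 7/10, 7/10, 7/10) (-17/10, 1/10, 1/10, 1/10) =
      e2pi (1/5) * theta4_even t (-1/10, 7/10, 7/10, 7/10) (3/10, 1/10, 1/10, 1/10)"
    by (rule theta4_even_add_int_b[where ka="-2" and kb=0 and kc=0 and kd=0]) simp_all
  also have "theta4_even t (-1/10, 7/10, 7/10, 7/10) (3/10, 1/10, 1/10, 1/10) = G"
    unfolding G_def by (rule theta4_even_add_even_lattice[symmetric, where ua=2 and ub=0 and uc=0 and ud=0]) simp_all
  finally have "theta_series t (1/10) (1/2) * theta_series t (3/10) (7/10) ^ 3 =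
      e2pi (1/2) * E + e2pi (-1/5 + (1 + 1/5)) * G"
    by (simp only: e2pi_add mult.assoc)
  also have "e2pi (-1/5 + (1 + 1/5)) = 1"
    using e2pi_of_int[of 1] by simp
  also have "e2pi (1/2) = -1"
    using e2pi_add_half[of 0] by simp
  finally have P2: "theta_series t (1/10) (1/2) * theta_series t (3/10) (7/10) ^ 3 = G - E"
    by simp
  show ?thesis
    unfolding P0 P1 P2 by simp
qed

lemma theta_series_identity_1:
  assumes "Im t > 0"
  shows "theta_series t (1/2) (1/10) * theta_series t (3/10) (3/10) ^ 3 =
    e2pi (1/5) * (e2pi (1/5) * theta_series t (1/10) (9/10) ^ 3 * theta_series t (3/10) (1/2)
                  + theta_series t (1/10) (3/10) ^ 3 * theta_series t (3/10) (1/10))"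
proof -
  have "theta_series t (7/10) (1/2) = e2pi (-3/10) * theta_series t (3/10) (1/2)"
    using theta_series_one_minus[of t "3/10" "1/2"] by simp
  moreover have "theta_series t (1/10) (-1/10) = e2pi (-1/10) * theta_series t (1/10) (9/10)"
    using theta_series_diff_one[of t "1/10" "9/10"] by simp
  moreover have "e2pi (-3/10) * e2pi (-1/10) ^ 3 = e2pi (1/5) * e2pi (1/5)"
    unfolding power3_eq_cube e2pi_add[symmetric] by (rule e2pi_eqI[where m="-1"]) simp
  ultimately show ?thesis
    unfolding theta_product_relation_1[OF assms] by (simp add: power_mult_distrib algebra_simps)
qed

lemma theta_series_identity_2:
  assumes "Im t > 0"
  shows "theta_series t (1/2) (3/10) * theta_series t (1/10) (1/10) ^ 3 =
    - (theta_series t (3/10) (7/10) ^ 3 * theta_series t (1/10) (1/2))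
    + theta_series t (3/10) (9/10) ^ 3 * theta_series t (1/10) (7/10)"
proof -
  have "theta_series t (9/10) (3/10) = e2pi (-1/10) * theta_series t (1/10) (7/10)"
    using theta_series_one_minus[of t "1/10" "3/10"] by simp
  moreover have "theta_series t (7/10) (1/10) = e2pi (-3/10) * theta_series t (3/10) (9/10)"
    using theta_series_one_minus[of t "3/10" "1/10"] by simp
  moreover have "e2pi (-1/10) * e2pi (-3/10) ^ 3 = 1"
    unfolding power3_eq_cube e2pi_add[symmetric] using e2pi_of_int[of "-1"] by simp
  ultimately show ?thesis
    unfolding theta_product_relation_2[OF assms] by (simp add: power_mult_distrib algebra_simps)
qed

section \<open>The \<open>q\<close>-binomial theorem\<close>

definition qfact :: "'a::field \<Rightarrow> nat \<Rightarrow> 'a" where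
  "qfact p k = (\<Prod>i<k. 1 - p ^ Suc i)"

definition qbinom :: "'a::field \<Rightarrow> nat \<Rightarrow> nat \<Rightarrow> 'a" where
  "qbinom p N i = (if i \<le> N then qfact p N / (qfact p i * qfact p (N - i)) else 0)"

lemma qfact_0 [simp]: "qfact p 0 = 1"
  unfolding qfact_def by simp

lemma qfact_Suc: "qfact p (Suc k) = qfact p k * (1 - p ^ Suc k)"
  unfolding qfact_def by simp

lemma qbinom_0: "qfact p N \<noteq> 0 \<Longrightarrow> qbinom p N 0 = 1"
  unfolding qbinom_def by simp

lemma qbinom_gt [simp]: "N < i \<Longrightarrow> qbinom p N i = 0"
  unfolding qbinom_def by simp

lemma qbinom_pascal:
  assumes nz: "\<And>k. qfact p k \<noteq> 0"
  shows "qbinom p (Suc N) (Suc j) = qbinom p N (Suc j) + p ^ (N - j) * qbinom p N j"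
proof (cases "j < N")
  case True
  then obtain s where N: "N = Suc (j + s)"
    by (auto dest: less_imp_Suc_add)
  define u w where "u = 1 - p ^ Suc j" and "w = 1 - p ^ Suc s"
  have uw: "u \<noteq> 0" "w \<noteq> 0"
    using nz[of "Suc j"] nz[of "Suc s"] by (auto simp: u_def w_def qfact_Suc)
  have e1: "qbinom p (Suc N) (Suc j) = qfact p N * (w + p ^ Suc s * u) / (qfact p j * u * (qfact p s * w))"
    unfolding qbinom_def N u_def w_def by (simp add: qfact_Suc algebra_simps power_add)
  have e2: "qbinom p N (Suc j) = qfact p N / (qfact p j * u * qfact p s)"
    unfolding qbinom_def N u_def by (simp add: qfact_Suc)
  have e3: "qbinom p N j = qfact p N / (qfact p j * (qfact p s * w))"
    unfolding qbinom_def N w_def by (simp add: qfact_Suc)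
  have "N - j = Suc s"
    using N by simp
  then show ?thesis
    unfolding e1 e2 e3 using uw nz[of j] nz[of s] by (simp add: field_simps)
next
  case False
  then show ?thesis
    using nz by (cases "j = N") (auto simp: qbinom_def)
qed

lemma Suc_choose_two: "Suc j choose 2 = (j choose 2) + j"
  by (simp add: numeral_2_eq_2)

lemma qbinomial_theorem:
  assumes nz: "\<And>k. qfact p k \<noteq> 0"
  shows "(\<Prod>k<N. 1 + y * p ^ k) = (\<Sum>i\<le>N. qbinom p N i * p ^ (i choose 2) * y ^ i)"
proof (induction N)
  case 0
  show ?case
    by (simp add: qbinom_0[OF nz] numeral_2_eq_2)
next
  case (Suc N)
  let ?c = "\<lambda>N i. qbinom p N i * p ^ (i choose 2) * y ^ i"
  have "(\<Prod>k<Suc N. 1 + y * p ^ k) = (\<Sum>i\<le>N. ?c N i) + (\<Sum>i\<le>N. ?c N i * (y * p ^ N))"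
    using Suc.IH by (simp add: distrib_left sum_distrib_right)
  also have "(\<Sum>i\<le>N. ?c N i) = ?c N 0 + (\<Sum>j\<le>N. ?c N (Suc j))"
    using sum.atMost_Suc_shift[of "?c N" N] by simp
  also have "(\<Sum>i\<le>N. ?c N i * (y * p ^ N)) = (\<Sum>j\<le>N. p ^ (N - j) * qbinom p N j * p ^ (Suc j choose 2) * y ^ Suc j)"
  proof (rule sum.cong[OF refl])
    fix j assume "j \<in> {..N}"
    then have "(j choose 2) + N = N - j + (Suc j choose 2)"
      by (simp add: Suc_choose_two)
    then have "p ^ (j choose 2) * p ^ N = p ^ (N - j) * p ^ (Suc j choose 2)"
      by (metis power_add)
    then show "?c N j * (y * p ^ N) = p ^ (N - j) * qbinom p N j * p ^ (Suc j choose 2) * y ^ Suc j"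
      by (simp add: algebra_simps)
  qed
  also have "?c N 0 + (\<Sum>j\<le>N. ?c N (Suc j)) + (\<Sum>j\<le>N. p ^ (N - j) * qbinom p N j * p ^ (Suc j choose 2) * y ^ Suc j)
      = ?c (Suc N) 0 + (\<Sum>j\<le>N. ?c (Suc N) (Suc j))"
    by (simp add: qbinom_pascal[OF nz] qbinom_0[OF nz] sum.distrib[symmetric] algebra_simps)
  also have "\<dots> = (\<Sum>i\<le>Suc N. ?c (Suc N) i)"
    by (rule sum.atMost_Suc_shift[symmetric])
  finally show ?case .
qed

section \<open>The Jacobi triple product\<close>

lemma prod_lessThan_double:
  fixes F :: "nat \<Rightarrow> 'a::comm_monoid_mult"
  shows "(\<Prod>k<2*n. F k) = (\<Prod>k<n. F (n - Suc k)) * (\<Prod>k<n. F (k + n))"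
proof -
  have "(\<Prod>k<2*n. F k) = prod F {0..<n} * prod F {n..<2*n}"
    using prod.atLeastLessThan_concat[of 0 n "2*n" F] by (simp add: atLeast0LessThan)
  also have "prod F {0..<n} = (\<Prod>k<n. F (n - Suc k))"
    using prod.atLeastLessThan_rev[of F 0 n] by (simp add: atLeast0LessThan)
  also have "prod F {n..<2*n} = (\<Prod>k<n. F (k + n))"
    using prod.shift_bounds_nat_ivl[of F 0 n n] by (simp add: mult_2 atLeast0LessThan)
  finally show ?thesis .
qed

lemma sum_odd_lessThan: "(\<Sum>k<n. 2 * of_nat k + 1 :: 'a::comm_ring_1) = of_nat n ^ 2"
  by (induction n) (auto simp: power2_eq_square algebra_simps)

lemma of_nat_choose_two: "of_nat (i choose 2) * 2 = (of_nat i * (of_nat i - 1) :: 'a::comm_ring_1)"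
  by (induction i) (simp_all add: Suc_choose_two algebra_simps numeral_2_eq_2)

lemma prod_one_plus_exp_pairs:
  fixes X Q :: complex
  shows "(\<Prod>k<2*n. 1 + exp (- X + (2 * of_nat k + 1 - 2 * of_nat n) * Q)) =
         exp (- of_nat n * X - of_nat n ^ 2 * Q) *
         (\<Prod>k<n. (1 + exp (X + (2 * of_nat k + 1) * Q)) * (1 + exp (- X + (2 * of_nat k + 1) * Q)))"
proof -
  define F where "F k = 1 + exp (- X + (2 * of_nat k + 1 - 2 * of_nat n) * Q)" for k
  have upper: "F (k + n) = 1 + exp (- X + (2 * of_nat k + 1) * Q)" for k
    unfolding F_def by (simp add: algebra_simps)
  have lower: "F (n - Suc k) = exp (- X - (2 * of_nat k + 1) * Q) * (1 + exp (X + (2 * of_nat k + 1) * Q))"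
    if "k < n" for k
  proof -
    have "F (n - Suc k) = 1 + exp (- X - (2 * of_nat k + 1) * Q)"
      unfolding F_def using that by (intro arg_cong[where f="\<lambda>z. 1 + exp z"]) (simp add: of_nat_diff algebra_simps)
    then show ?thesis
      by (simp add: distrib_left exp_add[symmetric])
  qed
  have "(\<Prod>k<n. F (n - Suc k)) =
      (\<Prod>k<n. exp (- X - (2 * of_nat k + 1) * Q)) * (\<Prod>k<n. 1 + exp (X + (2 * of_nat k + 1) * Q))"
    by (simp add: lower prod.distrib)
  also have "(\<Prod>k<n. exp (- X - (2 * of_nat k + 1) * Q)) = exp (- of_nat n * X - of_nat n ^ 2 * Q)"
    by (simp add: exp_sum[symmetric] sum_subtractf sum_distrib_right[symmetric] sum_odd_lessThan)
  finally show ?thesis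
    unfolding F_def[symmetric] prod_lessThan_double upper by (simp add: prod.distrib mult_ac)
qed

text \<open>Cauchy's theorem with \<open>p = q\<^sup>2\<close> and \<open>y = z\<^sup>-\<^sup>1 q\<^sup>1\<^sup>-\<^sup>2\<^sup>n\<close>, where \<open>z = e\<^sup>X\<close> and \<open>q = e\<^sup>Q\<close>.\<close>
lemma jacobi_triple_product_finite:
  fixes Q X :: complex
  assumes nz: "\<And>k. qfact (exp (2 * Q)) k \<noteq> 0"
  shows "(\<Prod>k<n. (1 + exp (X + (2 * of_nat k + 1) * Q)) * (1 + exp (- X + (2 * of_nat k + 1) * Q))) =
         (\<Sum>i\<le>2*n. qbinom (exp (2 * Q)) (2*n) i * exp (of_int (int n - int i) * X + (of_int (int n - int i))^2 * Q))"
proof -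
  define p y where "p = exp (2 * Q)" and "y = exp (- X - (2 * of_nat n - 1) * Q)"
  have "y * p ^ k = exp (- X + (2 * of_nat k + 1 - 2 * of_nat n) * Q)" for k
    unfolding y_def p_def exp_of_nat_mult[symmetric] exp_add[symmetric]
    by (rule arg_cong[where f=exp]) (simp add: algebra_simps)
  then have pairs: "(\<Prod>k<2*n. 1 + y * p ^ k) = exp (- of_nat n * X - of_nat n ^ 2 * Q) *
      (\<Prod>k<n. (1 + exp (X + (2 * of_nat k + 1) * Q)) * (1 + exp (- X + (2 * of_nat k + 1) * Q)))"
    by (simp only: prod_one_plus_exp_pairs)
  have "(\<Prod>k<n. (1 + exp (X + (2 * of_nat k + 1) * Q)) * (1 + exp (- X + (2 * of_nat k + 1) * Q))) =
      exp (of_nat n * X + of_nat n ^ 2 * Q) * (\<Prod>k<2*n. 1 + y * p ^ k)"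
    unfolding pairs by (simp add: mult.assoc[symmetric] exp_add[symmetric])
  also have "\<dots> = exp (of_nat n * X + of_nat n ^ 2 * Q) * (\<Sum>i\<le>2*n. qbinom p (2*n) i * p ^ (i choose 2) * y ^ i)"
    unfolding p_def by (simp only: qbinomial_theorem[OF nz])
  also have "\<dots> = (\<Sum>i\<le>2*n. qbinom p (2*n) i * exp (of_int (int n - int i) * X + (of_int (int n - int i))^2 * Q))"
  proof (rule sum_distrib_left[THEN trans], rule sum.cong[OF refl])
    fix i
    have "p ^ (i choose 2) * y ^ i = exp (of_nat (i choose 2) * 2 * Q + of_nat i * (- X - (2 * of_nat n - 1) * Q))"
      unfolding p_def y_def exp_of_nat_mult[symmetric] exp_add by (simp add: mult.assoc)
    also have "of_nat (i choose 2) * 2 * Q = of_nat i * (of_nat i - 1) * Q"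
      by (simp only: of_nat_choose_two)
    finally have pyi: "p ^ (i choose 2) * y ^ i = exp (- of_nat i * X + (of_nat i ^ 2 - 2 * of_nat n * of_nat i) * Q)"
      by (simp add: algebra_simps power2_eq_square)
    have "exp (of_nat n * X + of_nat n ^ 2 * Q) * (qbinom p (2*n) i * p ^ (i choose 2) * y ^ i) =
        qbinom p (2*n) i * (exp (of_nat n * X + of_nat n ^ 2 * Q) * (p ^ (i choose 2) * y ^ i))"
      by (simp only: mult_ac)
    also have "\<dots> = qbinom p (2*n) i * exp (of_int (int n - int i) * X + (of_int (int n - int i))^2 * Q)"
      unfolding pyi exp_add[symmetric] by (simp add: algebra_simps power2_eq_square)
    finally show "exp (of_nat n * X + of_nat n ^ 2 * Q) * (qbinom p (2*n) i * p ^ (i choose 2) * y ^ i) =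
        qbinom p (2*n) i * exp (of_int (int n - int i) * X + (of_int (int n - int i))^2 * Q)" .
  qed
  finally show ?thesis
    unfolding p_def .
qed

lemma LIMSEQ_prod_lessThan_nonzero:
  fixes f :: "nat \<Rightarrow> complex"
  assumes "summable (\<lambda>k. norm (f k - 1))" "\<And>k. f k \<noteq> 0"
  shows "(\<lambda>n. \<Prod>k<n. f k) \<longlonglongrightarrow> prodinf f" "prodinf f \<noteq> 0"
proof -
  have "convergent_prod f"
    using assms(1) by (intro abs_convergent_prod_imp_convergent_prod summable_imp_abs_convergent_prod)
  then show "(\<lambda>n. \<Prod>k<n. f k) \<longlonglongrightarrow> prodinf f" "prodinf f \<noteq> 0"
    using has_prod_imp_tendsto' convergent_prod_has_prod prodinf_nonzero assms(2) by blast+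
qed

lemma qfact_nonzero:
  fixes p :: complex
  assumes "norm p < 1"
  shows "qfact p k \<noteq> 0"
proof -
  have "norm (p ^ Suc i) < 1" for i
    using assms by (simp add: norm_power power_less_one_iff del: power_Suc)
  then have "1 - p ^ Suc i \<noteq> 0" for i
    by (metis norm_one order.irrefl right_minus_eq)
  then show ?thesis
    unfolding qfact_def by (simp add: prod_zero_iff)
qed

lemma qfact_LIMSEQ:
  fixes p :: complex
  assumes "norm p < 1"
  obtains P where "P \<noteq> 0" "qfact p \<longlonglongrightarrow> P"
proof -
  define f where "f i = 1 - p ^ Suc i" for i
  have "summable (\<lambda>i. norm p ^ Suc i)"
    using assms by simp
  then have "summable (\<lambda>i. norm (f i - 1))"
    by (simp add: f_def norm_power del: power_Suc)
  moreover have "f i \<noteq> 0" for i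
    using qfact_nonzero[OF assms, of "Suc i"] by (simp add: qfact_Suc f_def)
  moreover have "qfact p = (\<lambda>n. \<Prod>i<n. f i)"
    by (simp add: fun_eq_iff qfact_def f_def)
  ultimately show ?thesis
    using LIMSEQ_prod_lessThan_nonzero that by metis
qed

lemma qbinom_symmetric: "i \<le> N \<Longrightarrow> qbinom p N (N - i) = qbinom p N i"
  by (simp add: qbinom_def mult.commute)

lemma qbinom_bounded:
  fixes p :: complex
  assumes "norm p < 1"
  obtains M where "\<And>N i. norm (qbinom p N i) \<le> M"
proof -
  obtain P where P: "P \<noteq> 0" "qfact p \<longlonglongrightarrow> P"
    using qfact_LIMSEQ[OF assms] by blast
  then have "Bseq (qfact p)"
    using convergent_imp_Bseq convergentI by blast
  then obtain U where U: "U > 0" "\<And>k. norm (qfact p k) \<le> U"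
    by (auto elim: BseqE)
  have "(\<lambda>k. inverse (qfact p k)) \<longlonglongrightarrow> inverse P"
    using P by (intro tendsto_inverse) auto
  then have "Bseq (\<lambda>k. inverse (qfact p k))"
    using convergent_imp_Bseq convergentI by blast
  then obtain V where V: "V > 0" "\<And>k. norm (inverse (qfact p k)) \<le> V"
    by (auto elim: BseqE)
  have "norm (qbinom p N i) \<le> U * V * V" for N i
  proof (cases "i \<le> N")
    case True
    then have "norm (qbinom p N i) = norm (qfact p N) * norm (inverse (qfact p i)) * norm (inverse (qfact p (N - i)))"
      by (simp add: qbinom_def norm_divide norm_mult divide_inverse norm_inverse)
    also have "\<dots> \<le> U * V * V"
      using U V by (intro mult_mono) auto
    finally show ?thesis .
  qed (use U V in simp)
  then show ?thesis
    using that by blast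
qed

lemma LIMSEQ_suminf_bounded_weights:
  fixes c :: "nat \<Rightarrow> nat \<Rightarrow> complex"
  assumes lim: "\<And>j. (\<lambda>n. c n j) \<longlonglongrightarrow> L" and bound: "\<And>n j. norm (c n j) \<le> M"
    and w: "summable (\<lambda>j. norm (w j))"
  shows "(\<lambda>n. \<Sum>j. c n j * w j) \<longlonglongrightarrow> L * (\<Sum>j. w j)"
proof -
  have "eventually (\<lambda>n. summable (\<lambda>j. norm (c n j * w j))) sequentially \<and>
      summable (\<lambda>j. norm (L * w j)) \<and> (\<lambda>n. \<Sum>j. c n j * w j) \<longlonglongrightarrow> (\<Sum>j. L * w j)"
  proof (rule tannerys_theorem[where M="\<lambda>j. M * norm (w j)"])
    show "(\<lambda>n. c n j * w j) \<longlonglongrightarrow> L * w j" for j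
      by (rule tendsto_mult[OF lim tendsto_const])
    have "norm (c n j * w j) \<le> M * norm (w j)" for n j
      unfolding norm_mult by (rule mult_right_mono[OF bound norm_ge_zero])
    then show "\<forall>\<^sub>F (j, n) in at_top \<times>\<^sub>F sequentially. norm (c n j * w j) \<le> M * norm (w j)"
      by (simp add: always_eventually)
    show "summable (\<lambda>j. M * norm (w j))"
      by (rule summable_mult[OF w])
  qed simp
  then show ?thesis
    using suminf_mult[OF summable_norm_cancel[OF w], of L] by simp
qed

lemma sum_atMost_double:
  fixes F :: "nat \<Rightarrow> 'a::comm_monoid_add"
  shows "(\<Sum>i\<le>2*n. F i) = (\<Sum>j\<le>n. F (n - j)) + (\<Sum>j<n. F (n + j + 1))"
proof -
  have "(\<Sum>i\<le>2*n. F i) = (\<Sum>i\<le>n. F i) + (\<Sum>i\<in>{n+1..2*n}. F i)"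
    by (subst sum.union_disjoint[symmetric]) (auto intro: sum.cong)
  also have "(\<Sum>i\<le>n. F i) = (\<Sum>j\<le>n. F (n - j))"
    by (rule sum.reindex_bij_witness[where i="\<lambda>i. n - i" and j="\<lambda>i. n - i"]) auto
  also have "(\<Sum>i\<in>{n+1..2*n}. F i) = (\<Sum>j<n. F (n + j + 1))"
    by (rule sum.reindex_bij_witness[where i="\<lambda>j. n + j + 1" and j="\<lambda>i. i - n - 1"]) auto
  finally show ?thesis .
qed

definition central_qbinom :: "complex \<Rightarrow> nat \<Rightarrow> nat \<Rightarrow> complex" where
  "central_qbinom p n j = (if j \<le> n then qbinom p (2*n) (n - j) else 0)"

lemma central_qbinom_bounded:
  assumes "norm p < 1"
  obtains M where "\<And>n j. norm (central_qbinom p n j) \<le> M"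
proof -
  obtain M where M: "\<And>N i. norm (qbinom p N i) \<le> M"
    using qbinom_bounded[OF assms] by blast
  then have "norm (central_qbinom p n j) \<le> M" for n j
    using M[of 0 0] by (auto simp: central_qbinom_def intro: order_trans[OF norm_ge_zero])
  then show ?thesis
    using that by blast
qed

lemma central_qbinom_LIMSEQ:
  fixes p :: complex
  assumes P: "qfact p \<longlonglongrightarrow> P" "P \<noteq> 0"
  shows "(\<lambda>n. central_qbinom p n j) \<longlonglongrightarrow> inverse P"
proof -
  have "(\<lambda>n. qfact p (2*n)) \<longlonglongrightarrow> P"
    by (rule filterlim_compose[OF P(1)]) (simp add: filterlim_subseq strict_mono_def)
  moreover have "(\<lambda>n. qfact p (n - j)) \<longlonglongrightarrow> P"
    by (rule filterlim_compose[OF P(1) filterlim_minus_const_nat_at_top])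
  moreover have "(\<lambda>n. qfact p (n + j)) \<longlonglongrightarrow> P"
    by (rule LIMSEQ_ignore_initial_segment[OF P(1)])
  ultimately have "(\<lambda>n. qfact p (2*n) / (qfact p (n - j) * qfact p (n + j))) \<longlonglongrightarrow> P / (P * P)"
    using P(2) by (intro tendsto_divide tendsto_mult) auto
  then have lim: "(\<lambda>n. qfact p (2*n) / (qfact p (n - j) * qfact p (n + j))) \<longlonglongrightarrow> inverse P"
    using P(2) by (simp add: field_simps)
  have "eventually (\<lambda>n. qfact p (2*n) / (qfact p (n - j) * qfact p (n + j)) = central_qbinom p n j) sequentially"
    by (rule eventually_sequentiallyI[of j]) (simp add: central_qbinom_def qbinom_def)
  then show ?thesis
    by (rule Lim_transform_eventually[OF lim])
qed

lemma jacobi_triple_product_finite_central: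
  fixes Q X :: complex
  defines "e \<equiv> \<lambda>j::int. exp (of_int j * X + (of_int j)^2 * Q)"
  assumes nz: "\<And>k. qfact (exp (2 * Q)) k \<noteq> 0"
  shows "(\<Prod>k<n. (1 + exp (X + (2 * of_nat k + 1) * Q)) * (1 + exp (- X + (2 * of_nat k + 1) * Q))) =
         (\<Sum>j. central_qbinom (exp (2 * Q)) n j * e (int j))
         + (\<Sum>j. central_qbinom (exp (2 * Q)) n (j + 1) * e (- int j - 1))"
proof -
  define p where "p = exp (2 * Q)"
  have "(\<Prod>k<n. (1 + exp (X + (2 * of_nat k + 1) * Q)) * (1 + exp (- X + (2 * of_nat k + 1) * Q)))
      = (\<Sum>j\<le>n. qbinom p (2*n) (n - j) * e (int n - int (n - j)))
        + (\<Sum>j<n. qbinom p (2*n) (n + j + 1) * e (int n - int (n + j + 1)))"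
    unfolding jacobi_triple_product_finite[OF nz] sum_atMost_double e_def p_def ..
  also have "(\<Sum>j\<le>n. qbinom p (2*n) (n - j) * e (int n - int (n - j))) = (\<Sum>j. central_qbinom p n j * e (int j))"
    by (subst suminf_finite[of "{..n}"]) (auto simp: central_qbinom_def of_nat_diff intro: sum.cong)
  also have "(\<Sum>j<n. qbinom p (2*n) (n + j + 1) * e (int n - int (n + j + 1))) =
      (\<Sum>j. central_qbinom p n (j + 1) * e (- int j - 1))"
  proof (subst suminf_finite[of "{..<n}"], (simp_all add: central_qbinom_def)[2], rule sum.cong[OF refl])
    fix j assume "j \<in> {..<n}"
    then have "qbinom p (2*n) (n + j + 1) = qbinom p (2*n) (n - (j + 1))"
      using qbinom_symmetric[of "n + j + 1" "2*n" p] by (simp add: Suc_diff_Suc)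
    moreover have "int n - int (n + j + 1) = - int j - 1"
      by simp
    ultimately show "qbinom p (2*n) (n + j + 1) * e (int n - int (n + j + 1)) = central_qbinom p n (j + 1) * e (- int j - 1)"
      using \<open>j \<in> {..<n}\<close> by (simp only:) (simp add: central_qbinom_def)
  qed
  finally show ?thesis
    unfolding p_def .
qed

text \<open>In the usual notation this is
  \<open>\<Prod>\<^sub>k (1 + z q\<^sup>2\<^sup>k\<^sup>+\<^sup>1)(1 + z\<^sup>-\<^sup>1 q\<^sup>2\<^sup>k\<^sup>+\<^sup>1) = (q\<^sup>2;q\<^sup>2)\<^sub>\<infinity>\<^sup>-\<^sup>1 \<Sum>\<^sub>j z\<^sup>j q\<^sup>j\<^sup>2\<close>.
  Tannery's theorem passes to the limit in the finite version because the central
  \<open>q\<close>-binomial coefficients are bounded.\<close>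
lemma jacobi_triple_product:
  fixes Q X :: complex
  defines "e \<equiv> \<lambda>j::int. exp (of_int j * X + (of_int j)^2 * Q)"
  assumes q: "norm (exp (2 * Q)) < 1" and P: "qfact (exp (2 * Q)) \<longlonglongrightarrow> P" "P \<noteq> 0"
    and s: "summable (\<lambda>j. norm (e (int j)))" "summable (\<lambda>j. norm (e (- int j - 1)))"
  shows "(\<lambda>n. \<Prod>k<n. (1 + exp (X + (2 * of_nat k + 1) * Q)) * (1 + exp (- X + (2 * of_nat k + 1) * Q)))
           \<longlonglongrightarrow> inverse P * ((\<Sum>j. e (int j)) + (\<Sum>j. e (- int j - 1)))"
proof -
  obtain M where M: "\<And>n j. norm (central_qbinom (exp (2 * Q)) n j) \<le> M"
    using central_qbinom_bounded[OF q] by blast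
  have "(\<lambda>n. (\<Sum>j. central_qbinom (exp (2 * Q)) n j * e (int j))
        + (\<Sum>j. central_qbinom (exp (2 * Q)) n (j + 1) * e (- int j - 1)))
      \<longlonglongrightarrow> inverse P * (\<Sum>j. e (int j)) + inverse P * (\<Sum>j. e (- int j - 1))"
    using central_qbinom_LIMSEQ[OF P] M by (intro tendsto_add LIMSEQ_suminf_bounded_weights s)
  then show ?thesis
    unfolding e_def jacobi_triple_product_finite_central[OF qfact_nonzero[OF q]] by (simp add: distrib_left)
qed

section \<open>Non-vanishing of theta constants\<close>

lemma one_plus_exp_nonzero:
  assumes "Re z \<noteq> 0"
  shows "1 + exp z \<noteq> 0"
proof
  assume "1 + exp z = 0"
  then have "norm (exp z) = 1"
    by (simp add: add_eq_0_iff)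
  then show False
    using assms by (simp add: norm_exp_eq_Re)
qed

lemma LIMSEQ_prod_one_plus_exp:
  fixes Y Q :: complex
  assumes "Re Q < 0" "\<And>k::nat. Re Y + (2 * real k + 1) * Re Q \<noteq> 0"
  obtains L where "L \<noteq> 0" "(\<lambda>n. \<Prod>k<n. 1 + exp (Y + (2 * of_nat k + 1) * Q)) \<longlonglongrightarrow> L"
proof -
  define f where "f k = 1 + exp (Y + (2 * of_nat k + 1) * Q)" for k :: nat
  have "norm (f k - 1) = exp (Re Y + (2 * real k + 1) * Re Q)" for k
    by (simp add: f_def norm_exp_eq_Re)
  also have "exp (Re Y + (2 * real k + 1) * Re Q) = exp (Re Y + Re Q) * exp (2 * Re Q) ^ k" for k
    by (simp add: exp_add[symmetric] exp_of_nat_mult[symmetric] algebra_simps)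
  finally have "summable (\<lambda>k. norm (f k - 1))"
    using assms(1) by (simp add: summable_mult summable_geometric)
  moreover have "f k \<noteq> 0" for k
    unfolding f_def using assms(2)[of k] by (intro one_plus_exp_nonzero) simp
  ultimately have "(\<lambda>n. \<Prod>k<n. f k) \<longlonglongrightarrow> prodinf f" "prodinf f \<noteq> 0"
    by (rule LIMSEQ_prod_lessThan_nonzero)+
  then show ?thesis
    using that[of "prodinf f"] by (simp add: f_def)
qed

lemma jacobi_theta_sum_nonzero:
  fixes Q X :: complex
  defines "e \<equiv> \<lambda>j::int. exp (of_int j * X + (of_int j)^2 * Q)"
  assumes Q: "Re Q < 0"
    and X: "\<And>k::nat. Re X + (2 * real k + 1) * Re Q \<noteq> 0" "\<And>k::nat. - Re X + (2 * real k + 1) * Re Q \<noteq> 0"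
    and s: "summable (\<lambda>j. norm (e (int j)))" "summable (\<lambda>j. norm (e (- int j - 1)))"
  shows "(\<Sum>j. e (int j)) + (\<Sum>j. e (- int j - 1)) \<noteq> 0"
proof -
  have q: "norm (exp (2 * Q)) < 1"
    using Q by (simp add: norm_exp_eq_Re)
  obtain P where P: "P \<noteq> 0" "qfact (exp (2 * Q)) \<longlonglongrightarrow> P"
    using qfact_LIMSEQ[OF q] by blast
  obtain L1 where L1: "L1 \<noteq> 0" "(\<lambda>n. \<Prod>k<n. 1 + exp (X + (2 * of_nat k + 1) * Q)) \<longlonglongrightarrow> L1"
    by (rule LIMSEQ_prod_one_plus_exp[OF Q X(1)])
  have "Re (- X) + (2 * real k + 1) * Re Q \<noteq> 0" for k
    using X(2)[of k] by simp
  then obtain L2 where L2: "L2 \<noteq> 0" "(\<lambda>n. \<Prod>k<n. 1 + exp (- X + (2 * of_nat k + 1) * Q)) \<longlonglongrightarrow> L2"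
    by (rule LIMSEQ_prod_one_plus_exp[OF Q])
  have "(\<lambda>n. \<Prod>k<n. (1 + exp (X + (2 * of_nat k + 1) * Q)) * (1 + exp (- X + (2 * of_nat k + 1) * Q)))
      \<longlonglongrightarrow> L1 * L2"
    unfolding prod.distrib by (rule tendsto_mult[OF L1(2) L2(2)])
  with jacobi_triple_product[OF q P(2,1) s[unfolded e_def]]
  have "inverse P * ((\<Sum>j. e (int j)) + (\<Sum>j. e (- int j - 1))) = L1 * L2"
    unfolding e_def by (rule LIMSEQ_unique)
  then show ?thesis
    using L1(1) L2(1) by auto
qed

lemma theta_series_nonzero:
  assumes t: "Im t > 0" and a: "0 < a" "a < 1/2"
  shows "theta_series t a b \<noteq> 0"
proof -
  define Q X where "Q = complex_of_real pi * \<i> * t" and "X = 2 * complex_of_real pi * \<i> * (of_real a * t + of_real b)"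
  define e where "e j = exp (of_int j * X + (of_int j)^2 * Q)" for j :: int
  define C where "C = exp (2 * complex_of_real pi * \<i> * ((1/2) * of_real a ^ 2 * t + of_real a * of_real b))"
  have "C \<noteq> 0"
    by (simp add: C_def)
  have terms: "theta_term t a b n = C * e n" for n
    unfolding theta_term_def C_def e_def Q_def X_def exp_add[symmetric]
    by (rule arg_cong[where f=exp]) (simp add: power2_eq_square algebra_simps)
  have s: "summable (\<lambda>j. norm (e (int j)))" "summable (\<lambda>j. norm (e (- int j - 1)))"
    using summable_norm_theta_term[OF t, of a b] \<open>C \<noteq> 0\<close> by (simp_all add: terms norm_mult)
  have "Re Q < 0"
    using t by (simp add: Q_def)
  have "Re X + (2 * real k + 1) * Re Q \<noteq> 0" "- Re X + (2 * real k + 1) * Re Q \<noteq> 0" for k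
  proof -
    have "0 < pi * Im t * (2 * real k + 1 + 2 * a)" "0 < pi * Im t * (2 * real k + 1 - 2 * a)"
      using t a by simp_all
    moreover have "Re X + (2 * real k + 1) * Re Q = - (pi * Im t * (2 * real k + 1 + 2 * a))"
      "- Re X + (2 * real k + 1) * Re Q = - (pi * Im t * (2 * real k + 1 - 2 * a))"
      unfolding X_def Q_def by (simp_all add: algebra_simps)
    ultimately show "Re X + (2 * real k + 1) * Re Q \<noteq> 0" "- Re X + (2 * real k + 1) * Re Q \<noteq> 0"
      by linarith+
  qed
  from jacobi_theta_sum_nonzero[OF \<open>Re Q < 0\<close> this s[unfolded e_def]]
  have "(\<Sum>j. e (int j)) + (\<Sum>j. e (- int j - 1)) \<noteq> 0"
    unfolding e_def .
  moreover have "theta_series t a b = C * ((\<Sum>j. e (int j)) + (\<Sum>j. e (- int j - 1)))"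
    unfolding theta_series_def terms infsum_cmult_right' using infsumI[OF has_sum_int_split[OF s]] by simp
  ultimately show ?thesis
    using \<open>C \<noteq> 0\<close> by simp
qed

theorem theorem5p2:
  fixes tau :: complex
  assumes "Im tau > 0"
  defines "\<zeta> \<equiv> exp (2 * pi * \<i> / 5)"
  defines "c \<equiv> (\<lambda>k::nat. theta_const (1/5) (real k / 5) tau)"
  defines "d \<equiv> (\<lambda>k::nat. theta_const (3/5) (real k / 5) tau)"
  shows "theta_const 1 (1/5) tau = \<zeta> * (\<zeta> * (c 9)^3 * d 5 + (c 3)^3 * d 1) / (d 3)^3 \<and>
         theta_const 1 (3/5) tau = (- ((d 7)^3 * c 5) + (d 9)^3 * c 7) / (c 1)^3"
proof -
  have c: "c k = theta_series tau (1/10) (real k / 10)" and d: "d k = theta_series tau (3/10) (real k / 10)" for k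
    unfolding c_def d_def theta_const_eq_theta_series by simp_all
  have "\<zeta> = e2pi (1/5)"
    unfolding \<zeta>_def e2pi_def by simp
  moreover have "d 3 \<noteq> 0" "c 1 \<noteq> 0"
    unfolding c d using theta_series_nonzero[OF assms(1)] by simp_all
  ultimately show ?thesis
    using theta_series_identity_1[OF assms(1)] theta_series_identity_2[OF assms(1)]
    by (simp add: c d theta_const_eq_theta_series field_simps)
qed

end
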